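(* Let $\psi(x)=(x-\lfloor x\rfloor)-(x-\lfloor x\rfloor)^2$ for $x\geq0$. Then (i) $\lim_{n\to\infty}\frac{1}{\log n}\int_0^{n/2}\frac{\psi(x)}{x(1-x/n)}dx=\frac16$; (ii) $\lim_{n\to\infty}\frac{1}{(\log n)^2}\int_0^{n/2}\frac{\psi(x)\log((x/n)^{-1}-1)}{x(1-x/n)(1-2x/n)}dx=\frac1{12}$. *)

theory Defs
  imports "HOL-Analysis.Analysis"
begin

definition psi :: "real \<Rightarrow> real" where
  "psi x = (x - of_int \<lfloor>x\<rfloor>) - (x - of_int \<lfloor>x\<rfloor>)^2"

end

(*
  The sawtooth function psi has mean value 1/6 on every period, and psi - 1/6 has a bounded
  periodic primitive. Integrating by parts against a C^1 weight f therefore gives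
  integral psi * f = (integral f) / 6 + O(|f a| + |f b| + integral |f'|).

  (i) On [1, N/2] the weight is 1/(x (1 - x/N)) = 1/x + 1/(N - x), whose integral is ln (N - 1),
  while [0, 1] contributes O(1).

  (ii) Split [0, N/2] at 1 and N/4. Near 0 the integrand is O(ln N - ln x); near N/2 the factor
  ln (N/x - 1) vanishes to first order and cancels the pole of 1/(1 - 2x/N), so these pieces are
  O(ln N). On [1, N/4] partial fractions leave psi x (ln (N - x) - ln x) / x plus a remainder of
  size O(ln N), and the mean value of psi turns the main term into
  ln N ln (N/4) / 6 - (ln (N/4))^2 / 12 + O(ln N), which is (ln N)^2 / 12 + O(ln N).
*)
theory Submission
  imports Defs "HOL-Real_Asymp.Real_Asymp"
begin

section \<open>The sawtooth function and its periodic primitive\<close>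

lemma isCont_comp_frac:
  fixes h :: "real \<Rightarrow> 'a::topological_space"
  assumes h: "continuous_on {0..1} h" and h01: "h 0 = h 1"
  shows "isCont (\<lambda>y. h (frac y)) x"
proof -
  define m where "m = real_of_int \<lfloor>x\<rfloor>"
  define U where "U = {m - 1<..<m + 1}"
  have x: "x \<in> U" "open U"
    unfolding U_def m_def by (auto, linarith+)
  have frac_on_U: "h (frac y) = (if y \<le> m then h (y - m + 1) else h (y - m))" if "y \<in> U" for y
  proof (cases "y \<le> m")
    case True
    then consider "y = m" | "y < m" by linarith
    then show ?thesis
    proof cases
      case 1
      then show ?thesis using h01 by (simp add: m_def)
    next
      case 2
      with that have "frac y = y - m + 1"
        unfolding U_def m_def by (simp add: frac_unique_iff)
      with 2 show ?thesis by simp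
    qed
  next
    case False
    with that have "frac y = y - m"
      unfolding U_def m_def by (simp add: frac_unique_iff)
    with False show ?thesis by simp
  qed
  have "continuous_on U (\<lambda>y. if y \<le> m then h (y - m + 1) else h (y - m))"
    by (intro continuous_on_cases_le continuous_on_compose2[OF h] continuous_intros)
       (auto simp: U_def h01)
  then have "continuous_on U (\<lambda>y. h (frac y))"
    by (rule continuous_on_eq) (simp add: frac_on_U)
  then show ?thesis
    using x continuous_on_eq_continuous_at by blast
qed

lemma psi_eq_frac: "psi x = frac x * (1 - frac x)"
  unfolding psi_def frac_def by (simp add: power2_eq_square algebra_simps)

lemma psi_nonneg: "0 \<le> psi x"
  unfolding psi_eq_frac using frac_lt_1[of x] by simp

lemma psi_le_one: "psi x \<le> 1"
  unfolding psi_eq_frac using frac_lt_1[of x] by (simp add: mult_le_one)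

lemma psi_eq_on_unit_interval: "0 \<le> x \<Longrightarrow> x < 1 \<Longrightarrow> psi x = x - x\<^sup>2"
  unfolding psi_eq_frac by (simp add: power2_eq_square algebra_simps)

lemma isCont_psi: "isCont psi x"
  unfolding psi_eq_frac by (rule isCont_comp_frac[of "\<lambda>u. u * (1 - u)"]) (auto intro!: continuous_intros)

lemma continuous_on_psi [continuous_intros]:
  "continuous_on S g \<Longrightarrow> continuous_on S (\<lambda>x. psi (g x))"
  using isCont_psi by (metis continuous_at_imp_continuous_on continuous_on_compose2 subset_UNIV)

text \<open>A primitive of \<open>psi - 1/6\<close>: it is \<open>-B\<^sub>3(frac x)/3\<close> for the third
  Bernoulli polynomial \<open>B\<^sub>3\<close>, and it is periodic (hence bounded) because \<open>1/6\<close>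
  is the mean value of \<open>psi\<close> over a period.\<close>
definition psi_primitive :: "real \<Rightarrow> real" where
  "psi_primitive x = frac x ^ 2 / 2 - frac x ^ 3 / 3 - frac x / 6"

lemma isCont_psi_primitive: "isCont psi_primitive x"
  unfolding psi_primitive_def
  by (rule isCont_comp_frac[of "\<lambda>u. u ^ 2 / 2 - u ^ 3 / 3 - u / 6"]) (auto intro!: continuous_intros)

lemma abs_psi_primitive_le_one: "\<bar>psi_primitive x\<bar> \<le> 1"
proof -
  define u where "u = frac x"
  have u: "0 \<le> u" "u \<le> 1"
    unfolding u_def using frac_lt_1[of x] by auto
  have "psi_primitive x = u * (1 - u) * (2 * u - 1) / 6"
    unfolding psi_primitive_def u_def[symmetric] by (simp add: field_simps power2_eq_square power3_eq_cube)
  moreover have "\<bar>u * (1 - u) * (2 * u - 1)\<bar> \<le> 1 * 1 * 1"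
    unfolding abs_mult using u by (intro mult_mono) auto
  ultimately show ?thesis by simp
qed

lemma psi_primitive_has_real_derivative:
  assumes "x \<notin> \<int>"
  shows "(psi_primitive has_real_derivative (psi x - 1/6)) (at x)"
proof -
  define k where "k = real_of_int \<lfloor>x\<rfloor>"
  have frac_near_x: "frac y = y - k" if "y \<in> {k<..<k + 1}" for y
    using that unfolding k_def by (simp add: frac_unique_iff)
  have x: "x \<in> {k<..<k + 1}"
    using assms frac_gt_0_iff[of x] frac_lt_1[of x] unfolding k_def frac_def by auto
  have "((\<lambda>y. (y - k) ^ 2 / 2 - (y - k) ^ 3 / 3 - (y - k) / 6) has_real_derivative
          ((x - k) - (x - k) ^ 2 - 1/6)) (at x)"
    by (auto intro!: derivative_eq_intros simp: field_simps power2_eq_square)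
  then have "(psi_primitive has_real_derivative ((x - k) - (x - k) ^ 2 - 1/6)) (at x)"
    by (rule has_field_derivative_transform_within_open[where S = "{k<..<k + 1}"])
       (use x frac_near_x in \<open>auto simp: psi_primitive_def\<close>)
  moreover have "(x - k) - (x - k) ^ 2 - 1/6 = psi x - 1/6"
    by (simp add: frac_near_x[OF x] psi_eq_frac power2_eq_square algebra_simps)
  ultimately show ?thesis
    by simp
qed

lemma has_integral_of_real_derivative:
  assumes "a \<le> b" "\<And>x. x \<in> {a..b} \<Longrightarrow> (F has_real_derivative f x) (at x)"
  shows "(f has_integral (F b - F a)) {a..b}"
  using assms
  by (intro fundamental_theorem_of_calculus)
     (auto simp flip: has_real_derivative_iff_has_vector_derivative intro: has_field_derivative_at_within)

lemma integral_psi_mult_by_parts: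
  assumes "a \<le> b" and f': "\<And>x. x \<in> {a..b} \<Longrightarrow> (f has_real_derivative f' x) (at x)"
    and "continuous_on {a..b} f'"
  shows "integral {a..b} (\<lambda>x. psi x * f x) - integral {a..b} f / 6
    = psi_primitive b * f b - psi_primitive a * f a - integral {a..b} (\<lambda>x. psi_primitive x * f' x)"
proof -
  let ?P = psi_primitive
  have cont_f: "continuous_on {a..b} f"
    using f' by (meson DERIV_isCont continuous_at_imp_continuous_on)
  have cont_P: "continuous_on {a..b} ?P"
    using isCont_psi_primitive by (meson continuous_at_imp_continuous_on)
  have "((\<lambda>x. ?P x * f x) has_vector_derivative ((psi x - 1/6) * f x + ?P x * f' x)) (at x)"
    if "x \<in> {a<..<b} - {x \<in> \<int>. a \<le> x \<and> x \<le> b}" for x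
    using DERIV_mult[OF psi_primitive_has_real_derivative f'[of x]] that
    by (auto simp: has_real_derivative_iff_has_vector_derivative[symmetric] mult.commute)
  then have "((\<lambda>x. (psi x - 1/6) * f x + ?P x * f' x) has_integral (?P b * f b - ?P a * f a)) {a..b}"
    by (rule fundamental_theorem_of_calculus_interior_strong[OF finite_int_segment \<open>a \<le> b\<close>])
       (auto intro!: continuous_intros cont_f cont_P)
  then show ?thesis
    using \<open>continuous_on {a..b} f'\<close>
    by (simp add: has_integral_iff algebra_simps integral_add integral_diff integral_divide
        integrable_continuous_interval continuous_intros cont_f cont_P)
qed

lemma integral_psi_mult_approx:
  assumes "a \<le> b" and f': "\<And>x. x \<in> {a..b} \<Longrightarrow> (f has_real_derivative f' x) (at x)"
    and "continuous_on {a..b} f'" and G: "(G has_integral V) {a..b}"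
    and f'_le_G: "\<And>x. x \<in> {a..b} \<Longrightarrow> \<bar>f' x\<bar> \<le> G x"
  shows "\<bar>integral {a..b} (\<lambda>x. psi x * f x) - integral {a..b} f / 6\<bar> \<le> \<bar>f a\<bar> + \<bar>f b\<bar> + V"
proof -
  let ?P = psi_primitive
  have "norm (integral {a..b} (\<lambda>x. ?P x * f' x)) \<le> integral {a..b} G"
  proof (rule integral_norm_bound_integral)
    show "(\<lambda>x. ?P x * f' x) integrable_on {a..b}"
      using \<open>continuous_on {a..b} f'\<close> isCont_psi_primitive
      by (intro integrable_continuous_interval continuous_intros)
         (meson continuous_at_imp_continuous_on)
    fix x assume "x \<in> {a..b}"
    then have "\<bar>?P x\<bar> * \<bar>f' x\<bar> \<le> 1 * G x"
      using f'_le_G[of x] abs_psi_primitive_le_one[of x] by (intro mult_mono) auto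
    then show "norm (?P x * f' x) \<le> G x"
      by (simp add: abs_mult)
  qed (use G in blast)
  then have "\<bar>integral {a..b} (\<lambda>x. ?P x * f' x)\<bar> \<le> V"
    using G by (simp add: integral_unique)
  moreover have "\<bar>?P a * f a\<bar> \<le> \<bar>f a\<bar>" "\<bar>?P b * f b\<bar> \<le> \<bar>f b\<bar>"
    using abs_psi_primitive_le_one[of a] abs_psi_primitive_le_one[of b]
    by (simp_all add: abs_mult mult_left_le_one_le)
  ultimately show ?thesis
    using integral_psi_mult_by_parts[OF assms(1-3)] by (simp only: abs_le_iff) linarith
qed

lemma has_integral_const_div_square:
  fixes b c :: real
  assumes "1 \<le> b"
  shows "((\<lambda>x. c / x\<^sup>2) has_integral (c - c / b)) {1..b}"
proof -
  have "((\<lambda>x. c / x\<^sup>2) has_integral (- c / b - (- c / 1))) {1..b}"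
    using assms by (intro has_integral_of_real_derivative[where F = "\<lambda>x. - c / x"])
      (auto intro!: derivative_eq_intros simp: power2_eq_square)
  then show ?thesis
    by simp
qed

lemma dominated_integral_bound:
  fixes h g :: "real \<Rightarrow> real"
  assumes "continuous_on {a<..<b} h" and g: "(g has_integral V) {a..b}"
    and h_le_g: "\<And>x. x \<in> {a<..<b} \<Longrightarrow> \<bar>h x\<bar> \<le> g x"
  shows "h integrable_on {a..b}" "\<bar>integral {a..b} h\<bar> \<le> V"
proof -
  have g': "g integrable_on {a<..<b}"
    using g integrable_on_open_interval_real by blast
  have "h \<in> borel_measurable (lebesgue_on {a<..<b})"
    by (rule continuous_imp_measurable_on_sets_lebesgue[OF assms(1)]) auto
  then have h: "h integrable_on {a<..<b}"
    by (rule measurable_bounded_by_integrable_imp_integrable_real[OF _ g' h_le_g]) auto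
  then show "h integrable_on {a..b}"
    using integrable_on_open_interval_real by blast
  have "norm (integral {a<..<b} h) \<le> integral {a<..<b} g"
    by (rule integral_norm_bound_integral[OF h g']) (use h_le_g in auto)
  then show "\<bar>integral {a..b} h\<bar> \<le> V"
    using g by (simp add: integral_open_interval_real[symmetric] integral_unique)
qed

section \<open>The first integral\<close>

lemma integral_psi_mult_partial_fractions:
  assumes "N \<ge> 4"
  shows "\<bar>integral {1..N/2} (\<lambda>x. psi x * (1 / x + 1 / (N - x))) - ln (N - 1) / 6\<bar> \<le> 5"
proof -
  define f where "f = (\<lambda>x. 1 / x + 1 / (N - x))"
  have "\<bar>integral {1..N/2} (\<lambda>x. psi x * f x) - integral {1..N/2} f / 6\<bar>
      \<le> \<bar>f 1\<bar> + \<bar>f (N/2)\<bar> + (2 - 4 / N)"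
  proof (rule integral_psi_mult_approx)
    show "(f has_real_derivative (1 / (N - x)\<^sup>2 - 1 / x\<^sup>2)) (at x)" if "x \<in> {1..N/2}" for x
      unfolding f_def using that by (auto intro!: derivative_eq_intros simp: field_simps power2_eq_square)
    show "((\<lambda>x. 2 / x\<^sup>2) has_integral (2 - 4 / N)) {1..N/2}"
      using has_integral_const_div_square[of "N/2" 2] assms by simp
    show "\<bar>1 / (N - x)\<^sup>2 - 1 / x\<^sup>2\<bar> \<le> 2 / x\<^sup>2" if "x \<in> {1..N/2}" for x
    proof -
      have "1 / (N - x)\<^sup>2 \<le> 1 / x\<^sup>2"
        using that by (intro divide_left_mono power_mono) auto
      moreover have "0 \<le> 1 / (N - x)\<^sup>2" "2 / x\<^sup>2 = 2 * (1 / x\<^sup>2)"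
        by simp_all
      ultimately show ?thesis
        by (simp only: abs_le_iff) linarith
    qed
  qed (use assms in \<open>auto intro!: continuous_intros\<close>)
  moreover have "(f has_integral ((ln (N/2) - ln (N - N/2)) - (ln 1 - ln (N - 1)))) {1..N/2}"
    unfolding f_def using assms
    by (intro has_integral_of_real_derivative) (auto intro!: derivative_eq_intros simp: field_simps)
  then have "integral {1..N/2} f = ln (N - 1)"
    by (simp add: integral_unique)
  moreover have "\<bar>f 1\<bar> \<le> 2" "\<bar>f (N/2)\<bar> \<le> 1" "0 \<le> 4 / N"
    unfolding f_def using assms by (auto simp: field_simps)
  ultimately have "\<bar>integral {1..N/2} (\<lambda>x. psi x * f x) - ln (N - 1) / 6\<bar> \<le> 5"
    by (simp only: abs_le_iff) linarith
  then show ?thesis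
    unfolding f_def .
qed

lemma first_integral_estimate:
  assumes "N \<ge> 4"
  shows "\<bar>integral {0..N/2} (\<lambda>x. psi x / (x * (1 - x / N))) - ln (N - 1) / 6\<bar> \<le> 7"
proof -
  let ?h = "\<lambda>x. psi x / (x * (1 - x / N))"
  have "((\<lambda>x. 2) has_integral (2::real)) {0..1::real}"
    using has_integral_const_real[of "2::real" 0 1] by simp
  moreover have "\<bar>?h x\<bar> \<le> 2" if "x \<in> {0<..<1}" for x
  proof -
    have "0 \<le> ?h x"
      using that assms psi_nonneg[of x] by (simp add: field_simps)
    moreover have "?h x = (1 - x) / (1 - x / N)"
      using that assms by (auto simp: psi_eq_on_unit_interval field_simps power2_eq_square)
    moreover have "(1 - x) / (1 - x / N) \<le> 1 / (1/2)"
      using that assms by (intro frac_le) (auto simp: field_simps)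
    ultimately show ?thesis
      by (simp del: abs_divide)
  qed
  ultimately have on_0_1: "?h integrable_on {0..1}" "\<bar>integral {0..1} ?h\<bar> \<le> 2"
    using assms by (auto intro!: dominated_integral_bound continuous_intros simp: field_simps)
  have "(?h has_integral integral {1..N/2} (\<lambda>x. psi x * (1 / x + 1 / (N - x)))) {1..N/2}"
    using assms
    by (intro has_integral_eq[OF _ integrable_integral])
       (auto intro!: integrable_continuous_interval continuous_intros simp: field_simps)
  then have "integral {0..N/2} ?h
      = integral {0..1} ?h + integral {1..N/2} (\<lambda>x. psi x * (1 / x + 1 / (N - x)))"
    using on_0_1 assms by (intro integral_unique has_integral_combine) auto
  then show ?thesis
    using on_0_1(2) integral_psi_mult_partial_fractions[of N] assms by linarith
qed

section \<open>The second integral\<close>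

lemma integral_psi_mult_ln_over_x:
  assumes "b \<ge> 1"
  shows "\<bar>integral {1..b} (\<lambda>x. psi x * (ln x / x)) - (ln b)\<^sup>2 / 12\<bar> \<le> 3"
proof -
  let ?g = "\<lambda>x::real. ln x / x"
  have "\<bar>integral {1..b} (\<lambda>x. psi x * ?g x) - integral {1..b} ?g / 6\<bar>
      \<le> \<bar>?g 1\<bar> + \<bar>?g b\<bar> + (2 - (2 + ln b) / b)"
  proof (rule integral_psi_mult_approx)
    show "(?g has_real_derivative ((1 - ln x) / x\<^sup>2)) (at x)" if "x \<in> {1..b}" for x
      using that by (auto intro!: derivative_eq_intros simp: field_simps power2_eq_square)
    have "((\<lambda>x. (1 + ln x) / x\<^sup>2) has_integral (- (2 + ln b) / b - (- (2 + ln 1) / 1))) {1..b}"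
      using assms by (intro has_integral_of_real_derivative)
        (auto intro!: derivative_eq_intros simp: field_simps power2_eq_square)
    moreover have "- (2 + ln b) / b - (- (2 + ln 1) / 1) = 2 - (2 + ln b) / b"
      by (simp add: minus_divide_left)
    ultimately show "((\<lambda>x. (1 + ln x) / x\<^sup>2) has_integral (2 - (2 + ln b) / b)) {1..b}"
      by metis
    show "\<bar>(1 - ln x) / x\<^sup>2\<bar> \<le> (1 + ln x) / x\<^sup>2" if "x \<in> {1..b}" for x
    proof -
      have "\<bar>1 - ln x\<bar> \<le> 1 + ln x"
        using that by (simp add: abs_le_iff)
      then show ?thesis
        by (simp add: abs_divide divide_right_mono)
    qed
  qed (use assms in \<open>auto intro!: continuous_intros\<close>)
  moreover have "(?g has_integral ((ln b)\<^sup>2 / 2 - (ln 1)\<^sup>2 / 2)) {1..b}"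
    using assms by (intro has_integral_of_real_derivative)
      (auto intro!: derivative_eq_intros simp: field_simps power2_eq_square)
  then have "integral {1..b} ?g = (ln b)\<^sup>2 / 2"
    by (simp add: integral_unique)
  moreover have "\<bar>?g 1\<bar> = 0"
    by simp
  moreover have "\<bar>?g b\<bar> \<le> 1" "0 \<le> (2 + ln b) / b"
    using ln_le_minus_one[of b] assms by (auto simp: field_simps)
  ultimately show ?thesis
    by linarith
qed

lemma integral_ln_minus_over_x_approx:
  fixes b N :: real
  assumes "1 \<le> b" "2 * b \<le> N"
  shows "\<bar>integral {1..b} (\<lambda>x. ln (N - x) / x) - ln N * ln b\<bar> \<le> ln b"
proof -
  have int_c_over_x: "((\<lambda>x. c / x) has_integral (c * ln b)) {1..b}" for c
    using has_integral_of_real_derivative[of 1 b "\<lambda>x. c * ln x" "\<lambda>x. c / x"] assms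
    by (force intro!: derivative_eq_intros)
  have ln_bounds: "ln N - 1 \<le> ln (N - x)" "ln (N - x) \<le> ln N" if "x \<in> {1..b}" for x
  proof -
    have "ln (N / (N - x)) \<le> N / (N - x) - 1"
      using that assms by (intro ln_le_minus_one) auto
    also have "\<dots> \<le> 1"
      using that assms by (simp add: field_simps)
    finally show "ln N - 1 \<le> ln (N - x)"
      using that assms by (simp add: ln_div)
    show "ln (N - x) \<le> ln N"
      using that assms by simp
  qed
  have f: "(\<lambda>x. ln (N - x) / x) integrable_on {1..b}"
    using assms by (intro integrable_continuous_interval continuous_intros) auto
  have "(ln N - 1) * ln b \<le> integral {1..b} (\<lambda>x. ln (N - x) / x)"
    using ln_bounds(1) int_c_over_x[of "ln N - 1"]
    by (intro has_integral_le[OF _ integrable_integral[OF f]]) (auto intro: divide_right_mono)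
  moreover have "integral {1..b} (\<lambda>x. ln (N - x) / x) \<le> ln N * ln b"
    using ln_bounds(2) int_c_over_x[of "ln N"]
    by (intro has_integral_le[OF integrable_integral[OF f]]) (auto intro: divide_right_mono)
  ultimately show ?thesis
    by (simp add: abs_le_iff algebra_simps)
qed

lemma integral_psi_mult_ln_minus_over_x:
  fixes b N :: real
  assumes "1 \<le> b" "2 * b \<le> N"
  shows "\<bar>integral {1..b} (\<lambda>x. psi x * (ln (N - x) / x)) - ln N * ln b / 6\<bar> \<le> 4 * ln N + 1"
proof -
  let ?f = "\<lambda>x. ln (N - x) / x"
  let ?f' = "\<lambda>x. - 1 / ((N - x) * x) - ln (N - x) / x\<^sup>2"
  have "\<bar>integral {1..b} (\<lambda>x. psi x * ?f x) - integral {1..b} ?f / 6\<bar>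
      \<le> \<bar>?f 1\<bar> + \<bar>?f b\<bar> + ((1 + ln N) - (1 + ln N) / b)"
  proof (rule integral_psi_mult_approx)
    show "(?f has_real_derivative ?f' x) (at x)" if "x \<in> {1..b}" for x
      using that assms by (auto intro!: derivative_eq_intros simp: field_simps power2_eq_square)
    show "((\<lambda>x. (1 + ln N) / x\<^sup>2) has_integral ((1 + ln N) - (1 + ln N) / b)) {1..b}"
      by (rule has_integral_const_div_square[OF assms(1)])
    show "\<bar>?f' x\<bar> \<le> (1 + ln N) / x\<^sup>2" if "x \<in> {1..b}" for x
    proof -
      have "1 / ((N - x) * x) \<le> 1 / x\<^sup>2"
        using that assms by (intro divide_left_mono) (auto simp: power2_eq_square intro: mult_right_mono)
      moreover have "ln (N - x) / x\<^sup>2 \<le> ln N / x\<^sup>2"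
        using that assms by (intro divide_right_mono) auto
      moreover have "0 \<le> 1 / ((N - x) * x)" "0 \<le> ln (N - x) / x\<^sup>2"
        using that assms by auto
      moreover have "(1 + ln N) / x\<^sup>2 = 1 / x\<^sup>2 + ln N / x\<^sup>2"
        by (simp add: add_divide_distrib)
      ultimately show ?thesis
        by (simp only: abs_le_iff) linarith
    qed
  qed (use assms in \<open>auto intro!: continuous_intros\<close>)
  moreover have "\<bar>?f 1\<bar> \<le> ln N" "\<bar>?f b\<bar> \<le> ln N"
  proof -
    show "\<bar>?f 1\<bar> \<le> ln N"
      using assms by simp
    have "ln (N - b) / b \<le> ln (N - b) / 1"
      using assms by (intro divide_left_mono) auto
    moreover have "ln (N - b) \<le> ln N"
      using assms by simp
    ultimately show "\<bar>?f b\<bar> \<le> ln N"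
      using assms by (simp, linarith)
  qed
  moreover have "0 \<le> (1 + ln N) / b" "ln b \<le> ln N"
    using assms by auto
  ultimately show ?thesis
    using integral_ln_minus_over_x_approx[OF assms] by linarith
qed

definition psi_log_integrand :: "real \<Rightarrow> real \<Rightarrow> real" where
  "psi_log_integrand N = (\<lambda>x. psi x * ln (inverse (x / N) - 1) / (x * (1 - x / N) * (1 - 2 * x / N)))"

lemma psi_log_integrand_partial_fractions:
  assumes "0 < x" "2 * x < N"
  shows "psi_log_integrand N x
    = psi x * (ln (N - x) - ln x) * (1 / x + 4 / (N - 2 * x) - 1 / (N - x))"
proof -
  have "inverse (x / N) - 1 = (N - x) / x"
    using assms by (simp add: field_simps)
  then have "ln (inverse (x / N) - 1) = ln (N - x) - ln x"
    using assms by (simp add: ln_div)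
  moreover have "1 / (x * (1 - x / N) * (1 - 2 * x / N)) = 1 / x + 4 / (N - 2 * x) - 1 / (N - x)"
    using assms by (simp add: field_simps)
  ultimately show ?thesis
    unfolding psi_log_integrand_def by (metis times_divide_eq_right mult_1_right)
qed

lemma continuous_on_psi_log_integrand:
  assumes "0 \<le> a" "2 * b \<le> N"
  shows "continuous_on {a<..<b} (psi_log_integrand N)"
proof -
  have "continuous_on {a<..<b}
      (\<lambda>x. psi x * (ln (N - x) - ln x) * (1 / x + 4 / (N - 2 * x) - 1 / (N - x)))"
    using assms by (intro continuous_intros) (auto simp: field_simps)
  then show ?thesis
    by (rule continuous_on_eq) (use assms psi_log_integrand_partial_fractions in auto)
qed

lemma neg_ln_le_two_div_sqrt:
  assumes "0 < x"
  shows "- ln x \<le> 2 / sqrt x"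
proof -
  have "ln (1 / sqrt x) \<le> 1 / sqrt x - 1"
    using assms by (intro ln_le_minus_one) auto
  moreover have "ln (1 / sqrt x) = - ln x / 2"
    using assms by (simp add: ln_div ln_sqrt)
  ultimately show ?thesis
    by simp
qed

lemma abs_psi_log_integrand_le_near_0:
  assumes "N \<ge> 8" and x: "x \<in> {0<..<1}"
  shows "\<bar>psi_log_integrand N x\<bar> \<le> 2 * ln N + 4 / sqrt x"
proof -
  define L where "L = ln (inverse (x / N) - 1)"
  define Q where "Q = (1 - x / N) * (1 - 2 * x / N)"
  have "(3/4) * (3/4) \<le> Q"
    unfolding Q_def using x assms by (intro mult_mono) (auto simp: field_simps)
  then have Q: "1/2 \<le> Q"
    by linarith
  have "psi_log_integrand N x = x * ((1 - x) * L) / (x * Q)"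
    unfolding psi_log_integrand_def L_def Q_def
    using x by (simp add: psi_eq_on_unit_interval power2_eq_square algebra_simps)
  also have "\<dots> = (1 - x) * L / Q"
    using x by simp
  finally have eq: "psi_log_integrand N x = (1 - x) * L / Q" .
  have "0 \<le> L"
    unfolding L_def using x assms by (simp add: field_simps)
  have "L \<le> ln (N / x)"
    unfolding L_def using x assms by (subst ln_le_cancel_iff) (auto simp: field_simps)
  then have "L \<le> ln N - ln x"
    using x assms by (simp add: ln_div)
  have "(1 - x) * L / Q \<le> 1 * L / (1/2)"
    using x Q \<open>0 \<le> L\<close> by (intro frac_le mult_right_mono) auto
  moreover have "0 \<le> (1 - x) * L / Q"
    using x Q \<open>0 \<le> L\<close> by simp
  moreover have "4 / sqrt x = 2 * (2 / sqrt x)"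
    by simp
  ultimately show ?thesis
    unfolding eq using \<open>L \<le> ln N - ln x\<close> neg_ln_le_two_div_sqrt[of x] x by simp
qed

lemma psi_log_integrand_integral_near_0:
  assumes "N \<ge> 8"
  shows "psi_log_integrand N integrable_on {0..1}"
    and "\<bar>integral {0..1} (psi_log_integrand N)\<bar> \<le> 2 * ln N + 8"
proof -
  let ?g = "\<lambda>x. 2 * ln N + 4 / sqrt x"
  have "(?g has_integral ((2 * ln N * 1 + 8 * sqrt 1) - (2 * ln N * 0 + 8 * sqrt 0))) {0..1}"
  proof (rule fundamental_theorem_of_calculus_interior)
    fix x :: real assume "x \<in> {0<..<1}"
    then have "((\<lambda>x. 2 * ln N * x + 8 * sqrt x) has_real_derivative ?g x) (at x)"
      by (auto intro!: derivative_eq_intros simp: field_simps)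
    then show "((\<lambda>x. 2 * ln N * x + 8 * sqrt x) has_vector_derivative ?g x) (at x)"
      by (simp add: has_real_derivative_iff_has_vector_derivative)
  qed (auto intro!: continuous_intros)
  moreover have "\<bar>psi_log_integrand N x\<bar> \<le> ?g x" if "x \<in> {0<..<1}" for x
    using assms that by (rule abs_psi_log_integrand_le_near_0)
  ultimately show "psi_log_integrand N integrable_on {0..1}"
    and "\<bar>integral {0..1} (psi_log_integrand N)\<bar> \<le> 2 * ln N + 8"
    using assms by (auto intro: dominated_integral_bound[OF continuous_on_psi_log_integrand])
qed

lemma abs_psi_log_integrand_le_near_half:
  assumes "N > 0" and x: "x \<in> {N/4<..<N/2}"
  shows "\<bar>psi_log_integrand N x\<bar> \<le> 32 / N"
proof -
  define L where "L = ln (inverse (x / N) - 1)"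
  define D where "D = N\<^sup>2 / (x * (N - x) * (N - 2 * x))"
  have x_pos: "0 < x" "0 < N - 2 * x" "0 < N - x"
    using x assms by auto
  have "inverse (x / N) - 1 = (N - x) / x"
    using x_pos by (simp add: field_simps)
  then have "0 \<le> L" "L \<le> (N - x) / x - 1"
    unfolding L_def using x_pos by (auto intro: ln_le_minus_one)
  then have L: "0 \<le> L" "L \<le> (N - 2 * x) / x"
    using x_pos by (auto simp: field_simps)
  have D: "0 \<le> D"
    unfolding D_def using x_pos by simp
  have eq: "psi_log_integrand N x = psi x * L * D"
    unfolding psi_log_integrand_def L_def D_def using x_pos by (simp add: field_simps power2_eq_square)
  have "psi x * L * D \<le> 1 * ((N - 2 * x) / x) * D"
    using psi_le_one[of x] psi_nonneg[of x] L D by (intro mult_right_mono mult_mono) auto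
  also have "\<dots> = N\<^sup>2 / (x * x * (N - x))"
  proof -
    have "z / x * (M / (x * y * z)) = M / (x * x * y)" if "z \<noteq> 0" "x \<noteq> 0" "y \<noteq> 0"
      for x y z M :: real
      using that by (simp add: field_simps)
    then show ?thesis
      unfolding D_def mult_1_left using x_pos by simp
  qed
  also have "\<dots> \<le> N\<^sup>2 / ((N/4) * (N/4) * (N/2))"
    using x assms by (intro divide_left_mono mult_mono mult_pos_pos) auto
  also have "\<dots> = 32 / N"
    using assms by (simp add: field_simps power2_eq_square)
  finally show ?thesis
    using eq psi_nonneg[of x] L D by simp
qed

lemma psi_log_integrand_integral_near_half:
  assumes "N > 0"
  shows "psi_log_integrand N integrable_on {N/4..N/2}"
    and "\<bar>integral {N/4..N/2} (psi_log_integrand N)\<bar> \<le> 8"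
proof -
  have "((\<lambda>x. 32 / N) has_integral 8) {N/4..N/2}"
    using has_integral_const_real[of "32 / N" "N/4" "N/2"] assms by simp
  moreover have "\<bar>psi_log_integrand N x\<bar> \<le> 32 / N" if "x \<in> {N/4<..<N/2}" for x
    using assms that by (rule abs_psi_log_integrand_le_near_half)
  ultimately show "psi_log_integrand N integrable_on {N/4..N/2}"
    and "\<bar>integral {N/4..N/2} (psi_log_integrand N)\<bar> \<le> 8"
    using assms by (auto intro: dominated_integral_bound[OF continuous_on_psi_log_integrand])
qed

lemma integral_psi_log_remainder:
  assumes "N \<ge> 4"
  shows "(\<lambda>x. psi x * ((ln (N - x) - ln x) * (4 / (N - 2 * x) - 1 / (N - x)))) integrable_on {1..N/4}"
    and "\<bar>integral {1..N/4} (\<lambda>x. psi x * ((ln (N - x) - ln x) * (4 / (N - 2 * x) - 1 / (N - x))))\<bar>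
      \<le> 2 * ln N"
proof -
  let ?r = "\<lambda>x. psi x * ((ln (N - x) - ln x) * (4 / (N - 2 * x) - 1 / (N - x)))"
  have const: "((\<lambda>x. 8 * ln N / N) has_integral (8 * ln N / N * (N/4 - 1))) {1..N/4}"
    using has_integral_const_real[of "8 * ln N / N" 1 "N/4"] assms by (simp add: algebra_simps)
  have bound: "\<bar>?r x\<bar> \<le> 8 * ln N / N" if x: "x \<in> {1<..<N/4}" for x
  proof -
    have "ln x \<le> ln (N - x)" "ln (N - x) \<le> ln N" "0 \<le> ln x"
      using x by auto
    then have "0 \<le> ln (N - x) - ln x" "ln (N - x) - ln x \<le> ln N"
      by linarith+
    moreover have "0 \<le> 1 / (N - x)" "1 / (N - x) \<le> 4 / (N - 2 * x)" "4 / (N - 2 * x) \<le> 8 / N"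
      using x by (auto simp: field_simps)
    then have "0 \<le> 4 / (N - 2 * x) - 1 / (N - x)" "4 / (N - 2 * x) - 1 / (N - x) \<le> 8 / N"
      by linarith+
    ultimately have "\<bar>psi x\<bar> * (\<bar>ln (N - x) - ln x\<bar> * \<bar>4 / (N - 2 * x) - 1 / (N - x)\<bar>)
        \<le> 1 * (ln N * (8 / N))"
      using psi_le_one[of x] psi_nonneg[of x] by (intro mult_mono) auto
    then show ?thesis
      by (simp add: abs_mult mult.commute)
  qed
  have "continuous_on {1<..<N/4} ?r"
    using assms by (intro continuous_intros) (auto simp: field_simps)
  note dominated = dominated_integral_bound[OF this const bound]
  then show "?r integrable_on {1..N/4}"
    by blast
  have "8 * ln N / N * (N/4 - 1) \<le> 2 * ln N"
    using assms by (simp add: field_simps)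
  then show "\<bar>integral {1..N/4} ?r\<bar> \<le> 2 * ln N"
    using dominated(2) by linarith
qed

lemma psi_log_integrand_integral_middle:
  assumes "N \<ge> 4"
  shows "psi_log_integrand N integrable_on {1..N/4}"
    and "\<bar>integral {1..N/4} (psi_log_integrand N) - (ln N * ln (N/4) / 6 - (ln (N/4))\<^sup>2 / 12)\<bar>
      \<le> 6 * ln N + 4"
proof -
  let ?f = "\<lambda>x. psi x * (ln (N - x) / x)"
  let ?g = "\<lambda>x. psi x * (ln x / x)"
  let ?r = "\<lambda>x. psi x * ((ln (N - x) - ln x) * (4 / (N - 2 * x) - 1 / (N - x)))"
  have decomposition: "psi_log_integrand N x = ?f x - ?g x + ?r x" if "x \<in> {1..N/4}" for x
  proof -
    have "p * (a - b) * (1 / y + c - d) = p * (a / y) - p * (b / y) + p * ((a - b) * (c - d))"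
      for p a b y c d :: real
      by (simp add: divide_inverse algebra_simps)
    then show ?thesis
      using that psi_log_integrand_partial_fractions[of x N] by simp
  qed
  have "?f integrable_on {1..N/4}" "?g integrable_on {1..N/4}"
    using assms by (auto intro!: integrable_continuous_interval continuous_intros)
  then have "((\<lambda>x. ?f x - ?g x + ?r x) has_integral
      (integral {1..N/4} ?f - integral {1..N/4} ?g + integral {1..N/4} ?r)) {1..N/4}"
    using integral_psi_log_remainder(1)[OF assms]
    by (intro has_integral_add has_integral_diff integrable_integral)
  then have "(psi_log_integrand N has_integral
      (integral {1..N/4} ?f - integral {1..N/4} ?g + integral {1..N/4} ?r)) {1..N/4}"
    by (rule has_integral_eq[rotated]) (simp add: decomposition)
  then have "integral {1..N/4} (psi_log_integrand N)
      = integral {1..N/4} ?f - integral {1..N/4} ?g + integral {1..N/4} ?r"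
    and "psi_log_integrand N integrable_on {1..N/4}"
    by (auto simp: integral_unique)
  moreover have "\<bar>integral {1..N/4} ?f - ln N * ln (N/4) / 6\<bar> \<le> 4 * ln N + 1"
    using assms by (intro integral_psi_mult_ln_minus_over_x) auto
  moreover have "\<bar>integral {1..N/4} ?g - (ln (N/4))\<^sup>2 / 12\<bar> \<le> 3"
    using assms by (intro integral_psi_mult_ln_over_x) auto
  ultimately show "psi_log_integrand N integrable_on {1..N/4}"
    and "\<bar>integral {1..N/4} (psi_log_integrand N) - (ln N * ln (N/4) / 6 - (ln (N/4))\<^sup>2 / 12)\<bar>
      \<le> 6 * ln N + 4"
    using integral_psi_log_remainder(2)[OF assms] by (simp_all only: abs_le_iff) linarith+
qed

lemma second_integral_estimate:
  assumes "N \<ge> 8"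
  shows "\<bar>integral {0..N/2} (psi_log_integrand N) - (ln N * ln (N/4) / 6 - (ln (N/4))\<^sup>2 / 12)\<bar>
    \<le> 8 * ln N + 20"
proof -
  note near_0 = psi_log_integrand_integral_near_0[OF assms]
  note middle = psi_log_integrand_integral_middle[of N]
  note near_half = psi_log_integrand_integral_near_half[of N]
  have "(psi_log_integrand N has_integral
      (integral {0..1} (psi_log_integrand N) + integral {1..N/4} (psi_log_integrand N))) {0..N/4}"
    using assms near_0(1) middle(1)
    by (intro has_integral_combine[of 0 1 "N/4"] integrable_integral) auto
  then have "(psi_log_integrand N has_integral
      (integral {0..1} (psi_log_integrand N) + integral {1..N/4} (psi_log_integrand N)
        + integral {N/4..N/2} (psi_log_integrand N))) {0..N/2}"
    using assms near_half(1)
    by (intro has_integral_combine[of 0 "N/4" "N/2"] integrable_integral) auto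
  then have "integral {0..N/2} (psi_log_integrand N) = integral {0..1} (psi_log_integrand N)
      + integral {1..N/4} (psi_log_integrand N) + integral {N/4..N/2} (psi_log_integrand N)"
    by (rule integral_unique)
  moreover have "0 \<le> ln N"
    using assms by simp
  ultimately show ?thesis
    using assms near_0(2) middle(2) near_half(2) by (simp only: abs_le_iff) linarith
qed

lemma tendsto_of_error_bound:
  fixes I M E s :: "'a \<Rightarrow> real"
  assumes "eventually (\<lambda>n. \<bar>I n - M n\<bar> \<le> E n) F" and "eventually (\<lambda>n. 0 < s n) F"
    and "((\<lambda>n. M n / s n) \<longlongrightarrow> c) F" and "((\<lambda>n. E n / s n) \<longlongrightarrow> 0) F"
  shows "((\<lambda>n. (1 / s n) * I n) \<longlongrightarrow> c) F"
proof (rule tendsto_sandwich)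
  show "eventually (\<lambda>n. (M n - E n) / s n \<le> (1 / s n) * I n) F"
    using assms(1,2) by eventually_elim (auto simp: abs_le_iff intro!: divide_right_mono)
  show "eventually (\<lambda>n. (1 / s n) * I n \<le> (M n + E n) / s n) F"
    using assms(1,2) by eventually_elim (auto simp: abs_le_iff intro!: divide_right_mono)
  show "((\<lambda>n. (M n - E n) / s n) \<longlongrightarrow> c) F" "((\<lambda>n. (M n + E n) / s n) \<longlongrightarrow> c) F"
    using tendsto_diff[OF assms(3,4)] tendsto_add[OF assms(3,4)]
    by (simp_all add: add_divide_distrib diff_divide_distrib)
qed

theorem lemma18:
  shows "((\<lambda>n::nat. (1 / ln (real n)) *
            integral {0..real n / 2} (\<lambda>x. psi x / (x * (1 - x / real n))))
           \<longlonglongrightarrow> 1/6) \<and>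
         ((\<lambda>n::nat. (1 / (ln (real n))^2) *
            integral {0..real n / 2}
              (\<lambda>x. psi x * ln (inverse (x / real n) - 1) /
                    (x * (1 - x / real n) * (1 - 2 * x / real n))))
           \<longlonglongrightarrow> 1/12)"
proof
  have large: "eventually (\<lambda>n. real n \<ge> 8) sequentially"
    by real_asymp
  show "(\<lambda>n. (1 / ln (real n)) * integral {0..real n / 2} (\<lambda>x. psi x / (x * (1 - x / real n))))
      \<longlonglongrightarrow> 1/6"
  proof (rule tendsto_of_error_bound)
    show "eventually (\<lambda>n. \<bar>integral {0..real n / 2} (\<lambda>x. psi x / (x * (1 - x / real n)))
        - ln (real n - 1) / 6\<bar> \<le> 7) sequentially"
      using large by eventually_elim (simp add: first_integral_estimate)
  qed real_asymp+
  show "(\<lambda>n. (1 / (ln (real n))\<^sup>2) * integral {0..real n / 2} (\<lambda>x. psi x * ln (inverse (x / real n) - 1)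
      / (x * (1 - x / real n) * (1 - 2 * x / real n)))) \<longlonglongrightarrow> 1/12"
    unfolding psi_log_integrand_def[symmetric]
  proof (rule tendsto_of_error_bound)
    show "eventually (\<lambda>n. \<bar>integral {0..real n / 2} (psi_log_integrand (real n))
        - (ln (real n) * ln (real n / 4) / 6 - (ln (real n / 4))\<^sup>2 / 12)\<bar>
        \<le> 8 * ln (real n) + 20) sequentially"
      using large by eventually_elim (simp add: second_integral_estimate)
  qed real_asymp+
qed

end
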